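(* Let $n\geq 5$, let $5\leq s\leq n$, and let $\alpha_2,\dots,\alpha_n\in\mathbb{C}$ with $\alpha_2=\cdots=\alpha_{s-1}=0$ and $\alpha_s\neq0$. Then the transposed Poisson algebra $\mathbf{TP}(\alpha_2,\dots,\alpha_n)$ is isomorphic to $\mathbf{TP}(\alpha_2',\dots,\alpha_n')$ where $\alpha_s'=1$, $\alpha_{2s-3}'=\alpha$ for some $\alpha\in\mathbb{C}$ (this entry present only when $2s-3\leq n$), and all other $\alpha_i'=0$.
   Context: $\mu_0^n$ is the complex commutative associative algebra with basis $\{e_1,\dots,e_n\}$ and $e_i\cdot e_j=e_{i+j}$ for $2\leq i+j\leq n$, other products zero. For $\alpha_2,\dots,\alpha_n\in\mathbb{C}$, $\mathbf{TP}(\alpha_2,\dots,\alpha_n)$ denotes $\mu_0^n$ with its associative product together with the bracket $[e_i,e_j]=(j-i)\sum_{t=i+j-1}^{n}\alpha_{t-i-j+3}e_t$ for $3\leq i+j\leq n+1$, other brackets of basis elements zero. Isomorphisms preserve both operations. *)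

theory Defs
  imports Main "HOL.Complex"
begin

text \<open>Elements of the n-dimensional algebra with basis e_1,...,e_n are represented as
coefficient functions x :: nat => complex supported on {1..n}; e_i is the function
that is 1 at i and 0 elsewhere.\<close>

definition vecs :: "nat \<Rightarrow> (nat \<Rightarrow> complex) set" where
  "vecs n = {x. \<forall>t. t \<notin> {1..n} \<longrightarrow> x t = 0}"

definition mu0_mult :: "nat \<Rightarrow> (nat \<Rightarrow> complex) \<Rightarrow> (nat \<Rightarrow> complex) \<Rightarrow> (nat \<Rightarrow> complex)" where
  "mu0_mult n x y = (\<lambda>t. \<Sum>i\<in>{1..n}. \<Sum>j\<in>{1..n}.
      (if i + j = t \<and> t \<le> n then x i * y j else 0))"

text \<open>Structure constant of the bracket of TP(alpha): coefficient of e_t in [e_i,e_j].\<close>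
definition tp_const :: "nat \<Rightarrow> (nat \<Rightarrow> complex) \<Rightarrow> nat \<Rightarrow> nat \<Rightarrow> nat \<Rightarrow> complex" where
  "tp_const n \<alpha> i j t =
     (if 3 \<le> i + j \<and> i + j \<le> n + 1 \<and> i + j - 1 \<le> t \<and> t \<le> n
      then (of_int (int j - int i)) * \<alpha> (t + 3 - (i + j)) else 0)"

definition tp_bracket :: "nat \<Rightarrow> (nat \<Rightarrow> complex) \<Rightarrow> (nat \<Rightarrow> complex) \<Rightarrow> (nat \<Rightarrow> complex) \<Rightarrow> (nat \<Rightarrow> complex)" where
  "tp_bracket n \<alpha> x y = (\<lambda>t. \<Sum>i\<in>{1..n}. \<Sum>j\<in>{1..n}. x i * y j * tp_const n \<alpha> i j t)"

definition tp_isomorphic :: "nat \<Rightarrow> (nat \<Rightarrow> complex) \<Rightarrow> (nat \<Rightarrow> complex) \<Rightarrow> bool" where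
  "tp_isomorphic n \<alpha> \<beta> \<longleftrightarrow> (\<exists>f.
     bij_betw f (vecs n) (vecs n) \<and>
     (\<forall>x\<in>vecs n. \<forall>y\<in>vecs n. f (\<lambda>t. x t + y t) = (\<lambda>t. f x t + f y t)) \<and>
     (\<forall>c. \<forall>x\<in>vecs n. f (\<lambda>t. c * x t) = (\<lambda>t. c * f x t)) \<and>
     (\<forall>x\<in>vecs n. \<forall>y\<in>vecs n. f (mu0_mult n x y) = mu0_mult n (f x) (f y)) \<and>
     (\<forall>x\<in>vecs n. \<forall>y\<in>vecs n. f (tp_bracket n \<alpha> x y) = tp_bracket n \<beta> (f x) (f y)))"

end

(*
  Sending e_i to X^i identifies mu_0^n with X C[[X]] modulo X^(n+1): the product becomes
  multiplication of power series and the bracket of TP(alpha) becomes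
  [A, B] = (A B' - A' B) H  with  H = sum_i alpha_(i+2) X^i,
  the bracket attached to the formal vector field H d/dX.  A substitution X |-> P with
  P(0) = 0, P'(0) /= 0 is an automorphism of the associative algebra, and it carries the bracket
  of H to the bracket of G, where H(P) = P' G.  Since H has order k = s - 2 >= 2, a scaling
  X |-> l X makes its leading coefficient 1; after that, for d = k+1, k+2, ... in turn, the
  substitution X |-> X + c X^(d-k+1) leaves the coefficients below X^d unchanged and changes
  the coefficient of X^d by (2k - 1 - d) c.  So every coefficient except that of X^(2k-1)
  can be removed, which is the normal form X^k + a X^(2k-1).
*)
theory Submission
  imports Defs "HOL-Computational_Algebra.Formal_Power_Series"
    "HOL-Computational_Algebra.Fundamental_Theorem_Algebra"
begin

unbundle fps_syntax

section \<open>Power series agreeing below a given order\<close>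

definition fps_agree :: "nat \<Rightarrow> 'a fps \<Rightarrow> 'a fps \<Rightarrow> bool" where
  "fps_agree N A B \<longleftrightarrow> (\<forall>i<N. A $ i = B $ i)"

lemma fps_agree_iff:
  fixes A B :: "'a::comm_ring_1 fps"
  shows "fps_agree N A B \<longleftrightarrow> (\<exists>C. A = B + fps_X ^ N * C)"
proof
  assume "fps_agree N A B"
  then have "A = B + fps_X ^ N * fps_shift N (A - B)"
    by (intro fps_ext) (auto simp: fps_agree_def fps_X_power_mult_nth)
  then show "\<exists>C. A = B + fps_X ^ N * C" by blast
qed (auto simp: fps_agree_def fps_X_power_mult_nth)

lemma fps_agreeI:
  fixes A B :: "'a::comm_ring_1 fps"
  shows "A = B + fps_X ^ N * C \<Longrightarrow> fps_agree N A B"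
  using fps_agree_iff by blast

lemma fps_agree_refl [simp]: "fps_agree N A A"
  by (simp add: fps_agree_def)

lemma fps_agree_sym: "fps_agree N A B \<Longrightarrow> fps_agree N B A"
  by (simp add: fps_agree_def)

lemma fps_agree_trans [trans]: "fps_agree N A B \<Longrightarrow> fps_agree N B C \<Longrightarrow> fps_agree N A C"
  by (simp add: fps_agree_def)

lemma fps_agree_mono: "fps_agree N A B \<Longrightarrow> M \<le> N \<Longrightarrow> fps_agree M A B"
  by (simp add: fps_agree_def)

lemma fps_agree_diff:
  "fps_agree N A B \<Longrightarrow> fps_agree N C D \<Longrightarrow> fps_agree N (A - C) (B - D)"
  by (simp add: fps_agree_def)

lemma fps_agree_add:
  "fps_agree N A B \<Longrightarrow> fps_agree N C D \<Longrightarrow> fps_agree N (A + C) (B + D)"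
  by (simp add: fps_agree_def)

lemma fps_agree_mult:
  fixes A B C D :: "'a::comm_ring_1 fps"
  assumes "fps_agree N A B" "fps_agree N C D"
  shows "fps_agree N (A * C) (B * D)"
proof -
  obtain E F where "A = B + fps_X ^ N * E" "C = D + fps_X ^ N * F"
    using assms by (auto simp: fps_agree_iff)
  then have "A * C = B * D + fps_X ^ N * (E * D + B * F + fps_X ^ N * E * F)"
    by (simp add: algebra_simps)
  then show ?thesis by (rule fps_agreeI)
qed

lemma fps_agree_X_power_mult_zero: "N \<le> j \<Longrightarrow> fps_agree N (fps_X ^ j * A) 0"
  by (auto simp: fps_agree_def fps_X_power_mult_nth)

lemma fps_eq_X_mult_shift:
  fixes P :: "'a::comm_ring_1 fps"
  shows "P $ 0 = 0 \<Longrightarrow> P = fps_X * fps_shift 1 P"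
  by (intro fps_ext) auto

lemma fps_agree_compose:
  fixes A B P :: "'a::idom fps"
  assumes "fps_agree N A B" "P $ 0 = 0"
  shows "fps_agree N (A oo P) (B oo P)"
proof -
  obtain C where C: "A = B + fps_X ^ N * C" using assms(1) by (auto simp: fps_agree_iff)
  have "P ^ N = fps_X ^ N * fps_shift 1 P ^ N"
    by (subst fps_eq_X_mult_shift[OF assms(2)]) (simp add: power_mult_distrib)
  then have "A oo P = (B oo P) + fps_X ^ N * (fps_shift 1 P ^ N * (C oo P))"
    unfolding C using assms(2)
    by (simp add: fps_compose_add_distrib fps_compose_mult_distrib fps_X_power_compose mult.assoc)
  then show ?thesis by (rule fps_agreeI)
qed

section \<open>Brackets of formal vector fields\<close>

definition wronskian_bracket :: "'a::comm_ring_1 fps \<Rightarrow> 'a fps \<Rightarrow> 'a fps \<Rightarrow> 'a fps" where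
  "wronskian_bracket H A B = (A * fps_deriv B - fps_deriv A * B) * H"

lemma wronskian_bracket_antisym: "wronskian_bracket H B A = - wronskian_bracket H A B"
  by (simp add: wronskian_bracket_def algebra_simps)

lemma wronskian_bracket_add_left:
  "wronskian_bracket H (A + B) C = wronskian_bracket H A C + wronskian_bracket H B C"
  by (simp add: wronskian_bracket_def algebra_simps)

lemma wronskian_bracket_add_right:
  "wronskian_bracket H C (A + B) = wronskian_bracket H C A + wronskian_bracket H C B"
  by (simp add: wronskian_bracket_def algebra_simps)

lemma wronskian_bracket_const_mult:
  "wronskian_bracket H (fps_const a * A) (fps_const b * B)
     = fps_const (a * b) * wronskian_bracket H A B"
  by (simp add: wronskian_bracket_def algebra_simps flip: fps_const_mult)

lemma wronskian_bracket_sum: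
  "wronskian_bracket H (sum f I) (sum g J) = (\<Sum>i\<in>I. \<Sum>j\<in>J. wronskian_bracket H (f i) (g j))"
proof -
  have "sum f I * fps_deriv (sum g J) = (\<Sum>i\<in>I. \<Sum>j\<in>J. f i * fps_deriv (g j))"
    and "fps_deriv (sum f I) * sum g J = (\<Sum>i\<in>I. \<Sum>j\<in>J. fps_deriv (f i) * g j)"
    by (simp_all add: fps_deriv_sum sum_product)
  then show ?thesis
    by (simp add: wronskian_bracket_def left_diff_distrib sum_distrib_right sum_subtractf)
qed

lemma fps_deriv_X_power_Suc:
  "fps_deriv (fps_X ^ Suc N :: 'a::comm_ring_1 fps) = of_nat (Suc N) * fps_X ^ N"
  using fps_deriv_power'[of "fps_X :: 'a fps" "Suc N"] by (simp del: power_Suc of_nat_Suc)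

lemma wronskian_bracket_X_power:
  assumes "1 \<le> i" "1 \<le> j"
  shows "wronskian_bracket H (fps_X ^ i) (fps_X ^ j)
           = fps_const (of_nat j - of_nat i) * (fps_X ^ (i + j - 1) * H)"
proof -
  obtain i' j' where ij: "i = Suc i'" "j = Suc j'" using assms by (metis Suc_le_D One_nat_def)
  show ?thesis
    unfolding wronskian_bracket_def ij fps_deriv_X_power_Suc
    by (simp add: algebra_simps fps_of_nat flip: power_add fps_const_sub)
qed

lemma wronskian_bracket_X_power_mult_left_agree:
  fixes G :: "'a::comm_ring_1 fps"
  assumes "G $ 0 = 0"
  shows "fps_agree (Suc N) (wronskian_bracket H (fps_X ^ Suc N * C) G) 0"
proof -
  have G: "G = fps_X * fps_shift 1 G" by (rule fps_eq_X_mult_shift[OF assms])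
  have "wronskian_bracket H (fps_X ^ Suc N * C) G = 0 + fps_X ^ Suc N *
      ((C * fps_deriv G - (of_nat (Suc N) * C + fps_X * fps_deriv C) * fps_shift 1 G) * H)"
    unfolding wronskian_bracket_def
    by (subst (2) G, simp only: fps_deriv_mult fps_deriv_X_power_Suc) (simp add: algebra_simps)
  then show ?thesis by (rule fps_agreeI)
qed

lemma wronskian_bracket_agree:
  fixes A B :: "'a::comm_ring_1 fps"
  assumes "fps_agree (Suc N) A A'" "fps_agree (Suc N) B B'" "A' $ 0 = 0" "B' $ 0 = 0"
  shows "fps_agree (Suc N) (wronskian_bracket H A B) (wronskian_bracket H A' B')"
proof -
  obtain C D where C: "A = A' + fps_X ^ Suc N * C" and D: "B = B' + fps_X ^ Suc N * D"
    using assms(1,2) by (auto simp: fps_agree_iff)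
  let ?C = "fps_X ^ Suc N * C" and ?D = "fps_X ^ Suc N * D"
  have "wronskian_bracket H A B = wronskian_bracket H A' B' + wronskian_bracket H ?C B'
      - wronskian_bracket H ?D A' + wronskian_bracket H ?C ?D"
    unfolding C D wronskian_bracket_add_left wronskian_bracket_add_right
    by (simp add: wronskian_bracket_antisym[of _ A'])
  moreover have "fps_agree (Suc N) (wronskian_bracket H A' B' + wronskian_bracket H ?C B'
      - wronskian_bracket H ?D A' + wronskian_bracket H ?C ?D) (wronskian_bracket H A' B' + 0 - 0 + 0)"
    by (intro fps_agree_add fps_agree_diff fps_agree_refl wronskian_bracket_X_power_mult_left_agree)
      (simp_all add: assms fps_X_power_mult_nth)
  ultimately show ?thesis by simp
qed

lemma wronskian_bracket_compose:
  fixes H G P :: "'a::idom fps"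
  assumes "P $ 0 = 0" and "H oo P = fps_deriv P * G"
  shows "wronskian_bracket H A B oo P = wronskian_bracket G (A oo P) (B oo P)"
  using assms
  by (simp add: wronskian_bracket_def fps_compose_mult_distrib fps_compose_sub_distrib
      fps_compose_deriv algebra_simps)

definition conjugate_fields :: "'a::comm_ring_1 fps \<Rightarrow> 'a fps \<Rightarrow> bool" where
  "conjugate_fields H G \<longleftrightarrow> (\<exists>P. P $ 0 = 0 \<and> P $ 1 \<noteq> 0 \<and> H oo P = fps_deriv P * G)"

lemma conjugate_fields_refl: "conjugate_fields H H"
  unfolding conjugate_fields_def by (intro exI[of _ fps_X]) simp

lemma conjugate_fields_by_substitution_agree:
  fixes H P T :: "'a::field fps"
  assumes P: "P $ 0 = 0" "P $ 1 \<noteq> 0" and H: "fps_agree N (H oo P) (fps_deriv P * T)"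
  shows "\<exists>G. conjugate_fields H G \<and> fps_agree N G T"
proof -
  define G where "G = (H oo P) * inverse (fps_deriv P)"
  have inv: "fps_deriv P * inverse (fps_deriv P) = 1"
    using P(2) by (intro inverse_mult_eq_1') simp
  then have "H oo P = fps_deriv P * G"
    by (simp add: G_def algebra_simps)
  with P have "conjugate_fields H G"
    unfolding conjugate_fields_def by blast
  moreover have "fps_agree N G (fps_deriv P * T * inverse (fps_deriv P))"
    unfolding G_def using H by (rule fps_agree_mult[OF _ fps_agree_refl])
  ultimately show ?thesis
    using inv by (metis mult.commute mult.left_commute mult_1_right)
qed

lemma conjugate_fields_trans:
  fixes H G K :: "'a::idom fps"
  assumes "conjugate_fields H G" "conjugate_fields G K"
  shows "conjugate_fields H K"
proof -
  obtain P where P: "P $ 0 = 0" "P $ 1 \<noteq> 0" "H oo P = fps_deriv P * G"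
    using assms(1) by (auto simp: conjugate_fields_def)
  obtain Q where Q: "Q $ 0 = 0" "Q $ 1 \<noteq> 0" "G oo Q = fps_deriv Q * K"
    using assms(2) by (auto simp: conjugate_fields_def)
  have "H oo (P oo Q) = (fps_deriv P * G) oo Q"
    using P(3) by (simp add: fps_compose_assoc[OF Q(1) P(1)])
  also have "\<dots> = fps_deriv (P oo Q) * K"
    using Q by (simp add: fps_compose_mult_distrib fps_compose_deriv)
  finally have "H oo (P oo Q) = fps_deriv (P oo Q) * K" .
  moreover have "(P oo Q) $ 1 = P $ 1 * Q $ 1"
    using P(1) by (simp add: fps_compose_nth)
  ultimately show ?thesis
    using P Q unfolding conjugate_fields_def by (intro exI[of _ "P oo Q"]) simp
qed

section \<open>Normal form of a formal vector field\<close>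

definition normal_field :: "nat \<Rightarrow> 'a::comm_ring_1 \<Rightarrow> 'a fps" where
  "normal_field k a = fps_X ^ k + fps_const a * fps_X ^ (2 * k - 1)"

lemma normal_field_nth:
  "normal_field k a $ i = (if i = k then 1 else 0) + (if i = 2 * k - 1 then a else 0)"
  by (simp add: normal_field_def)

lemma one_plus_power_expansion:
  fixes Y :: "'a::comm_ring_1"
  shows "\<exists>Z. (1 + Y) ^ j = 1 + of_nat j * Y + Y ^ 2 * Z"
proof (induction j)
  case 0
  show ?case by (intro exI[of _ 0]) simp
next
  case (Suc j)
  then obtain Z where "(1 + Y) ^ j = 1 + of_nat j * Y + Y ^ 2 * Z" by blast
  then have "(1 + Y) ^ Suc j = 1 + of_nat (Suc j) * Y + Y ^ 2 * (of_nat j + Z + Y * Z)"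
    by (simp add: algebra_simps power2_eq_square)
  then show ?case by blast
qed

lemma near_identity_power:
  fixes c :: "'a::comm_ring_1"
  shows "\<exists>Z. (fps_X + fps_const c * fps_X ^ (m + 2)) ^ j = fps_X ^ j
           + fps_const (of_nat j * c) * fps_X ^ (j + m + 1) + fps_X ^ (j + 2 * m + 2) * Z"
proof -
  define Y where "Y = fps_const c * fps_X ^ (m + 1)"
  obtain Z where Z: "(1 + Y) ^ j = 1 + of_nat j * Y + Y ^ 2 * Z"
    using one_plus_power_expansion by blast
  have "fps_X + fps_const c * fps_X ^ (m + 2) = fps_X * (1 + Y)"
    by (simp add: Y_def algebra_simps)
  then have "(fps_X + fps_const c * fps_X ^ (m + 2)) ^ j = fps_X ^ j * (1 + Y) ^ j"
    by (simp add: power_mult_distrib)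
  also have "\<dots> = fps_X ^ j + fps_const (of_nat j * c) * fps_X ^ (j + m + 1)
      + fps_X ^ (j + 2 * m + 2) * (fps_const (c ^ 2) * Z)"
    unfolding Z unfolding Y_def
    by (simp add: algebra_simps power_add power2_eq_square power_mult fps_of_nat[symmetric]
        flip: fps_const_mult)
  finally show ?thesis by blast
qed

lemma near_identity_power_agree:
  fixes c :: "'a::comm_ring_1"
  assumes "N \<le> j + 2 * m + 2"
  shows "fps_agree N ((fps_X + fps_const c * fps_X ^ (m + 2)) ^ j)
           (fps_X ^ j + fps_const (of_nat j * c) * fps_X ^ (j + m + 1))"
proof -
  obtain Z where "(fps_X + fps_const c * fps_X ^ (m + 2)) ^ j = fps_X ^ j
      + fps_const (of_nat j * c) * fps_X ^ (j + m + 1) + fps_X ^ (j + 2 * m + 2) * Z"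
    using near_identity_power by blast
  then have "fps_agree (j + 2 * m + 2) ((fps_X + fps_const c * fps_X ^ (m + 2)) ^ j)
      (fps_X ^ j + fps_const (of_nat j * c) * fps_X ^ (j + m + 1))"
    by (intro fps_agreeI)
  then show ?thesis using assms by (rule fps_agree_mono)
qed

lemma near_identity_power_agree_X_power:
  fixes c :: "'a::comm_ring_1"
  assumes "N \<le> j + m + 1"
  shows "fps_agree N ((fps_X + fps_const c * fps_X ^ (m + 2)) ^ j) (fps_X ^ j)"
proof -
  have "fps_agree N (fps_const (of_nat j * c) * fps_X ^ (j + m + 1)) 0"
    using fps_agree_X_power_mult_zero[OF assms, of "fps_const (of_nat j * c)"]
    by (simp only: mult.commute)
  then have "fps_agree N (fps_X ^ j + fps_const (of_nat j * c) * fps_X ^ (j + m + 1)) (fps_X ^ j)"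
    using fps_agree_add[OF fps_agree_refl] by fastforce
  with near_identity_power_agree[of N j m c] assms show ?thesis
    by (auto intro: fps_agree_trans)
qed


lemma near_identity_deriv_mult_normal_field_agree:
  fixes c :: "'a::comm_ring_1"
  assumes "2 \<le> k" "d = k + m + 1"
  shows "fps_agree (Suc d) (fps_deriv (fps_X + fps_const c * fps_X ^ (m + 2)) * normal_field k a)
           (normal_field k a + fps_const (of_nat (m + 2) * c) * fps_X ^ d)"
proof (rule fps_agreeI)
  define b where "b = of_nat (m + 2) * c"
  have "fps_deriv (fps_X + fps_const c * fps_X ^ (m + 2))
      = 1 + fps_const c * (of_nat (Suc (Suc m)) * fps_X ^ Suc m)"
    unfolding add_2_eq_Suc'
    by (simp only: fps_deriv_add fps_deriv_fps_X fps_deriv_mult_const_left fps_deriv_X_power_Suc)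
  also have "\<dots> = 1 + fps_const b * fps_X ^ (m + 1)"
    by (simp add: b_def fps_of_nat algebra_simps
        flip: fps_const_add fps_const_mult fps_numeral_fps_const)
  finally have deriv:
    "fps_deriv (fps_X + fps_const c * fps_X ^ (m + 2)) = 1 + fps_const b * fps_X ^ (m + 1)" .
  have "m + 1 + k = d" and "m + 1 + (2 * k - 1) = Suc d + (k - 2)"
    using assms by simp_all
  then have X_powers: "fps_X ^ (m + 1) * fps_X ^ k = fps_X ^ d"
      "fps_X ^ (m + 1) * fps_X ^ (2 * k - 1) = fps_X ^ Suc d * fps_X ^ (k - 2)"
    by (simp_all only: power_add[symmetric])
  have "fps_deriv (fps_X + fps_const c * fps_X ^ (m + 2)) * normal_field k a
      = normal_field k a + fps_const b * (fps_X ^ (m + 1) * fps_X ^ k)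
        + fps_X ^ (m + 1) * fps_X ^ (2 * k - 1) * fps_const (b * a)"
    unfolding deriv by (simp add: normal_field_def algebra_simps flip: fps_const_mult)
  then show "fps_deriv (fps_X + fps_const c * fps_X ^ (m + 2)) * normal_field k a
      = normal_field k a + fps_const b * fps_X ^ d
        + fps_X ^ Suc d * (fps_X ^ (k - 2) * fps_const (b * a))"
    unfolding X_powers by (simp only: mult.assoc)
qed

lemma normal_form_correction:
  fixes H :: "'a::field_char_0 fps"
  assumes k: "2 \<le> k" and d: "d = k + m + 1" "d \<noteq> 2 * k - 1"
    and H: "fps_agree d H (normal_field k a)"
    and c: "of_nat k * c + H $ d = of_nat (m + 2) * c"
  defines "P \<equiv> fps_X + fps_const c * fps_X ^ (m + 2)"
  shows "fps_agree (Suc d) (H oo P) (fps_deriv P * normal_field k a)"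
proof -
  define e where "e = H $ d"
  let ?T = "normal_field k a"
  have P0: "P $ 0 = 0" by (simp add: P_def)
  have "fps_agree (Suc d) H (?T + fps_const e * fps_X ^ d)"
    using H d k by (auto simp: fps_agree_def normal_field_nth e_def less_Suc_eq)
  then have "fps_agree (Suc d) (H oo P) ((?T + fps_const e * fps_X ^ d) oo P)"
    using P0 by (rule fps_agree_compose)
  also have "(?T + fps_const e * fps_X ^ d) oo P
      = P ^ k + fps_const a * P ^ (2 * k - 1) + fps_const e * P ^ d"
    using P0 by (simp add: normal_field_def fps_compose_add_distrib fps_compose_mult_distrib
        fps_X_power_compose)
  also have "fps_agree (Suc d) \<dots> ((fps_X ^ k + fps_const (of_nat k * c) * fps_X ^ d)
      + fps_const a * fps_X ^ (2 * k - 1) + fps_const e * fps_X ^ d)"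
  proof -
    have "fps_agree (Suc d) (P ^ k) (fps_X ^ k + fps_const (of_nat k * c) * fps_X ^ d)"
      unfolding P_def d(1) by (rule near_identity_power_agree) simp
    moreover have "fps_agree (Suc d) (P ^ (2 * k - 1)) (fps_X ^ (2 * k - 1))"
      and "fps_agree (Suc d) (P ^ d) (fps_X ^ d)"
      unfolding P_def by (rule near_identity_power_agree_X_power; use d k in simp)+
    ultimately show ?thesis by (intro fps_agree_add fps_agree_mult fps_agree_refl)
  qed
  also have "\<dots> = ?T + fps_const (of_nat k * c + e) * fps_X ^ d"
    by (simp add: normal_field_def algebra_simps flip: fps_const_add)
  also have "\<dots> = ?T + fps_const (of_nat (m + 2) * c) * fps_X ^ d"
    unfolding e_def c ..
  also have "fps_agree (Suc d) \<dots> (fps_deriv P * ?T)"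
    unfolding P_def by (rule fps_agree_sym[OF near_identity_deriv_mult_normal_field_agree[OF k d(1)]])
  finally show ?thesis .
qed

lemma normal_form_step:
  fixes H :: "'a::field_char_0 fps"
  assumes k: "2 \<le> k" and d: "k + 1 \<le> d" and H: "fps_agree d H (normal_field k a)"
  shows "\<exists>G a'. conjugate_fields H G \<and> fps_agree (Suc d) G (normal_field k a')"
proof (cases "d = 2 * k - 1")
  case True
  then have "fps_agree (Suc d) H (normal_field k (H $ d))"
    using H k by (auto simp: fps_agree_def normal_field_nth less_Suc_eq)
  then show ?thesis using conjugate_fields_refl by blast
next
  case False
  define m where "m = d - k - 1"
  have dm: "d = k + m + 1" using d by (simp add: m_def)
  have "m + 2 \<noteq> k" using False dm by arith
  then have nz: "(of_nat (m + 2) - of_nat k :: 'a) \<noteq> 0"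
    by (simp only: right_minus_eq of_nat_eq_iff) simp
  define c where "c = H $ d / (of_nat (m + 2) - of_nat k)"
  have c: "of_nat k * c + H $ d = of_nat (m + 2) * c"
    using nz by (simp add: c_def field_simps)
  define P where "P = fps_X + fps_const c * fps_X ^ (m + 2)"
  have "P $ 0 = 0" "P $ 1 \<noteq> 0" by (simp_all add: P_def)
  moreover have "fps_agree (Suc d) (H oo P) (fps_deriv P * normal_field k a)"
    unfolding P_def by (rule normal_form_correction[OF k dm False H c])
  ultimately have "\<exists>G. conjugate_fields H G \<and> fps_agree (Suc d) G (normal_field k a)"
    by (rule conjugate_fields_by_substitution_agree)
  then show ?thesis by blast
qed

lemma normal_form_leading_coeff:
  fixes H :: "'a::alg_closed_field fps"
  assumes k: "2 \<le> k" and H: "H \<noteq> 0" "subdegree H = k"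
  shows "\<exists>G. conjugate_fields H G \<and> fps_agree (Suc k) G (normal_field k 0)"
proof -
  have Hk: "H $ k \<noteq> 0" using H by auto
  have "k - 1 > 0" using k by simp
  then obtain l :: 'a where l: "l ^ (k - 1) = inverse (H $ k)"
    using nth_root_exists by blast
  have "k = Suc (k - 1)" using k by simp
  then have "l ^ k = l * l ^ (k - 1)" by (metis power_Suc)
  then have scale: "l ^ k * H $ k = l" using l Hk by simp
  have "l ^ (k - 1) \<noteq> 0" using l Hk by simp
  then have "l \<noteq> 0" using \<open>k - 1 > 0\<close> by (auto simp: zero_power)
  define P where "P = fps_const l * fps_X"
  have "P $ 0 = 0" "P $ 1 \<noteq> 0" using \<open>l \<noteq> 0\<close> by (simp_all add: P_def)
  moreover have "fps_agree (Suc k) (H oo P) (fps_deriv P * normal_field k 0)"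
    using H scale by (auto simp: P_def fps_agree_def fps_compose_linear normal_field_def less_Suc_eq)
  ultimately show ?thesis by (rule conjugate_fields_by_substitution_agree)
qed

theorem conjugate_fields_normal_form:
  fixes H :: "'a::{alg_closed_field, field_char_0} fps"
  assumes "2 \<le> k" "H \<noteq> 0" "subdegree H = k"
  shows "\<exists>G a. conjugate_fields H G \<and> fps_agree N G (normal_field k a)"
proof -
  have "\<exists>G a. conjugate_fields H G \<and> fps_agree d G (normal_field k a)" if "k + 1 \<le> d" for d
    using that
  proof (induction d rule: nat_induct_at_least)
    case base
    then show ?case using normal_form_leading_coeff[OF assms] by auto
  next
    case (Suc d)
    then obtain G a where "conjugate_fields H G" "fps_agree d G (normal_field k a)"
      by blast
    with normal_form_step[OF assms(1) Suc.hyps(1)] show ?case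
      by (blast intro: conjugate_fields_trans)
  qed
  from this[of "max N (k + 1)"] show ?thesis
    by (meson fps_agree_mono max.cobounded1 max.cobounded2)
qed

section \<open>The power series model of TP(alpha)\<close>

definition vec_of_fps :: "nat \<Rightarrow> complex fps \<Rightarrow> nat \<Rightarrow> complex" where
  "vec_of_fps n A = (\<lambda>t. if t \<in> {1..n} then A $ t else 0)"

lemma vec_of_fps_in_vecs: "vec_of_fps n A \<in> vecs n"
  by (simp add: vecs_def vec_of_fps_def)

lemma vecs_zero: "x \<in> vecs n \<Longrightarrow> x 0 = 0"
  by (simp add: vecs_def)

lemma vec_of_fps_Abs_fps: "x \<in> vecs n \<Longrightarrow> vec_of_fps n (Abs_fps x) = x"
  by (auto simp: vecs_def vec_of_fps_def)

lemma Abs_fps_vec_of_fps_agree: "A $ 0 = 0 \<Longrightarrow> fps_agree (Suc n) (Abs_fps (vec_of_fps n A)) A"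
  by (auto simp: fps_agree_def vec_of_fps_def Suc_le_eq)

lemma vec_of_fps_agree: "fps_agree (Suc n) A B \<Longrightarrow> vec_of_fps n A = vec_of_fps n B"
  by (auto simp: fps_agree_def vec_of_fps_def)

lemma Abs_fps_vecs_eq_sum:
  assumes "x \<in> vecs n"
  shows "Abs_fps x = (\<Sum>i\<in>{1..n}. fps_const (x i) * fps_X ^ i)"
proof (rule fps_ext)
  fix t
  have "(\<Sum>i\<in>{1..n}. fps_const (x i) * fps_X ^ i) $ t = (\<Sum>i\<in>{1..n}. if t = i then x i else 0)"
    unfolding fps_sum_nth by (intro sum.cong) auto
  also have "\<dots> = x t"
    using assms by (simp add: vecs_def)
  finally show "Abs_fps x $ t = (\<Sum>i\<in>{1..n}. fps_const (x i) * fps_X ^ i) $ t"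
    by simp
qed

lemma mu0_mult_in_vecs: "mu0_mult n x y \<in> vecs n"
  by (auto simp: vecs_def mu0_mult_def intro!: sum.neutral)

lemma mu0_mult_agree:
  assumes "x \<in> vecs n" "y \<in> vecs n"
  shows "fps_agree (Suc n) (Abs_fps (mu0_mult n x y)) (Abs_fps x * Abs_fps y)"
proof -
  have "Abs_fps x * Abs_fps y
      = (\<Sum>i\<in>{1..n}. \<Sum>j\<in>{1..n}. fps_const (x i * y j) * fps_X ^ (i + j))"
    unfolding Abs_fps_vecs_eq_sum[OF assms(1)] Abs_fps_vecs_eq_sum[OF assms(2)] sum_product
    by (intro sum.cong refl) (simp add: power_add algebra_simps)
  then show ?thesis
    by (auto simp: fps_agree_def fps_sum_nth mu0_mult_def intro!: sum.cong)
qed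

definition tp_series :: "(nat \<Rightarrow> complex) \<Rightarrow> complex fps" where
  "tp_series \<alpha> = Abs_fps (\<lambda>i. \<alpha> (i + 2))"

lemma tp_const_eq_wronskian_bracket_nth:
  assumes "i \<in> {1..n}" "j \<in> {1..n}" "t \<le> n"
  shows "tp_const n \<alpha> i j t = wronskian_bracket (tp_series \<alpha>) (fps_X ^ i) (fps_X ^ j) $ t"
proof -
  have "wronskian_bracket (tp_series \<alpha>) (fps_X ^ i) (fps_X ^ j) $ t
      = (of_nat j - of_nat i) * (if t < i + j - 1 then 0 else \<alpha> (t - (i + j - 1) + 2))"
    using assms by (simp add: wronskian_bracket_X_power fps_X_power_mult_nth tp_series_def)
  also have "\<dots> = tp_const n \<alpha> i j t"
  proof (cases "i = 1 \<and> j = 1")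
    case False
    then have "3 \<le> i + j" using assms by auto
    moreover have "t + 3 - (i + j) = t - (i + j - 1) + 2" if "i + j - 1 \<le> t"
      using that \<open>3 \<le> i + j\<close> by simp
    ultimately show ?thesis using assms by (auto simp: tp_const_def of_int_diff)
  qed (simp add: tp_const_def)
  finally show ?thesis by simp
qed

lemma tp_bracket_in_vecs: "tp_bracket n \<alpha> x y \<in> vecs n"
  by (auto simp: vecs_def tp_bracket_def tp_const_def intro!: sum.neutral)

lemma tp_bracket_agree:
  assumes "x \<in> vecs n" "y \<in> vecs n"
  shows "fps_agree (Suc n) (Abs_fps (tp_bracket n \<alpha> x y))
           (wronskian_bracket (tp_series \<alpha>) (Abs_fps x) (Abs_fps y))"
  unfolding fps_agree_def
proof (intro allI impI)
  fix t assume "t < Suc n"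
  then have "wronskian_bracket (tp_series \<alpha>) (Abs_fps x) (Abs_fps y) $ t
      = (\<Sum>i\<in>{1..n}. \<Sum>j\<in>{1..n}. x i * y j * tp_const n \<alpha> i j t)"
    unfolding Abs_fps_vecs_eq_sum[OF assms(1)] Abs_fps_vecs_eq_sum[OF assms(2)]
      wronskian_bracket_sum wronskian_bracket_const_mult
    by (auto simp: fps_sum_nth tp_const_eq_wronskian_bracket_nth intro!: sum.cong)
  then show "Abs_fps (tp_bracket n \<alpha> x y) $ t
      = wronskian_bracket (tp_series \<alpha>) (Abs_fps x) (Abs_fps y) $ t"
    by (simp add: tp_bracket_def)
qed

definition substitution :: "nat \<Rightarrow> complex fps \<Rightarrow> (nat \<Rightarrow> complex) \<Rightarrow> nat \<Rightarrow> complex" where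
  "substitution n P x = vec_of_fps n (Abs_fps x oo P)"

lemma substitution_in_vecs: "substitution n P x \<in> vecs n"
  by (simp add: substitution_def vec_of_fps_in_vecs)

lemma substitution_agree:
  "x \<in> vecs n \<Longrightarrow> fps_agree (Suc n) (Abs_fps (substitution n P x)) (Abs_fps x oo P)"
  unfolding substitution_def by (intro Abs_fps_vec_of_fps_agree) (simp add: vecs_zero)

lemma substitution_compose:
  assumes "P $ 0 = 0" "Q $ 0 = 0" "x \<in> vecs n"
  shows "substitution n P (substitution n Q x) = substitution n (Q oo P) x"
proof -
  have "fps_agree (Suc n) (Abs_fps (substitution n Q x) oo P) ((Abs_fps x oo Q) oo P)"
    using substitution_agree[OF assms(3)] assms(1) by (rule fps_agree_compose)
  then show ?thesis
    unfolding substitution_def fps_compose_assoc[OF assms(1,2)] by (rule vec_of_fps_agree)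
qed

lemma substitution_X: "x \<in> vecs n \<Longrightarrow> substitution n fps_X x = x"
  by (simp add: substitution_def vec_of_fps_Abs_fps)

lemma bij_betw_substitution:
  assumes "P $ 0 = 0" "P $ 1 \<noteq> 0"
  shows "bij_betw (substitution n P) (vecs n) (vecs n)"
proof (rule bij_betw_byWitness[where f' = "substitution n (fps_inv P)"])
  have Q0: "fps_inv P $ 0 = 0" by (simp add: fps_inv_def)
  show "\<forall>x\<in>vecs n. substitution n (fps_inv P) (substitution n P x) = x"
    using assms Q0 by (simp add: substitution_compose fps_inv_right substitution_X)
  show "\<forall>x\<in>vecs n. substitution n P (substitution n (fps_inv P) x) = x"
    using assms Q0 by (simp add: substitution_compose fps_inv substitution_X)
qed (auto simp: substitution_in_vecs)

lemma substitution_add: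
  "substitution n P (\<lambda>t. x t + y t) = (\<lambda>t. substitution n P x t + substitution n P y t)"
proof -
  have "Abs_fps (\<lambda>t. x t + y t) = Abs_fps x + Abs_fps y" by (simp add: fps_ext)
  then show ?thesis by (auto simp: substitution_def vec_of_fps_def fps_compose_add_distrib)
qed

lemma substitution_smult: "substitution n P (\<lambda>t. c * x t) = (\<lambda>t. c * substitution n P x t)"
proof -
  have "Abs_fps (\<lambda>t. c * x t) = fps_const c * Abs_fps x" by (simp add: fps_ext)
  then show ?thesis
    by (auto simp: substitution_def vec_of_fps_def simp flip: fps_const_mult_apply_left)
qed

lemma substitution_mu0_mult:
  assumes P: "P $ 0 = 0" and xy: "x \<in> vecs n" "y \<in> vecs n"
  shows "substitution n P (mu0_mult n x y) = mu0_mult n (substitution n P x) (substitution n P y)"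
proof -
  let ?f = "substitution n P"
  have "fps_agree (Suc n) (Abs_fps (mu0_mult n x y) oo P) ((Abs_fps x * Abs_fps y) oo P)"
    using mu0_mult_agree[OF xy] P by (rule fps_agree_compose)
  also have "(Abs_fps x * Abs_fps y) oo P = (Abs_fps x oo P) * (Abs_fps y oo P)"
    using P by (rule fps_compose_mult_distrib)
  also have "fps_agree (Suc n) \<dots> (Abs_fps (?f x) * Abs_fps (?f y))"
    by (intro fps_agree_mult fps_agree_sym[OF substitution_agree] xy)
  also have "fps_agree (Suc n) \<dots> (Abs_fps (mu0_mult n (?f x) (?f y)))"
    by (intro fps_agree_sym[OF mu0_mult_agree] substitution_in_vecs)
  finally show ?thesis
    unfolding substitution_def[of _ _ "mu0_mult n x y"]
    by (simp add: vec_of_fps_agree vec_of_fps_Abs_fps mu0_mult_in_vecs)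
qed

lemma substitution_tp_bracket:
  assumes P: "P $ 0 = 0" and HP: "tp_series \<alpha> oo P = fps_deriv P * tp_series \<beta>"
    and xy: "x \<in> vecs n" "y \<in> vecs n"
  shows "substitution n P (tp_bracket n \<alpha> x y)
           = tp_bracket n \<beta> (substitution n P x) (substitution n P y)"
proof -
  let ?f = "substitution n P"
  have "fps_agree (Suc n) (Abs_fps (tp_bracket n \<alpha> x y) oo P)
      (wronskian_bracket (tp_series \<alpha>) (Abs_fps x) (Abs_fps y) oo P)"
    using tp_bracket_agree[OF xy] P by (rule fps_agree_compose)
  also have "wronskian_bracket (tp_series \<alpha>) (Abs_fps x) (Abs_fps y) oo P
      = wronskian_bracket (tp_series \<beta>) (Abs_fps x oo P) (Abs_fps y oo P)"
    using P HP by (rule wronskian_bracket_compose)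
  also have "fps_agree (Suc n) \<dots>
      (wronskian_bracket (tp_series \<beta>) (Abs_fps (?f x)) (Abs_fps (?f y)))"
    by (intro wronskian_bracket_agree fps_agree_sym[OF substitution_agree] xy)
      (simp_all add: vecs_zero[OF substitution_in_vecs])
  also have "fps_agree (Suc n) \<dots> (Abs_fps (tp_bracket n \<beta> (?f x) (?f y)))"
    by (intro fps_agree_sym[OF tp_bracket_agree] substitution_in_vecs)
  finally show ?thesis
    unfolding substitution_def[of _ _ "tp_bracket n \<alpha> x y"]
    by (simp add: vec_of_fps_agree vec_of_fps_Abs_fps tp_bracket_in_vecs)
qed

lemma tp_isomorphic_if_conjugate_fields:
  assumes "conjugate_fields (tp_series \<alpha>) (tp_series \<beta>)"
  shows "tp_isomorphic n \<alpha> \<beta>"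
proof -
  obtain P where P: "P $ 0 = 0" "P $ 1 \<noteq> 0" "tp_series \<alpha> oo P = fps_deriv P * tp_series \<beta>"
    using assms by (auto simp: conjugate_fields_def)
  show ?thesis
    unfolding tp_isomorphic_def
    by (intro exI[of _ "substitution n P"] conjI ballI allI bij_betw_substitution
        substitution_add substitution_smult substitution_mu0_mult substitution_tp_bracket P)
qed

lemma tp_isomorphic_cong:
  assumes "tp_isomorphic n \<alpha> \<beta>" "\<forall>i\<in>{2..n}. \<beta> i = \<gamma> i"
  shows "tp_isomorphic n \<alpha> \<gamma>"
proof -
  have "tp_const n \<beta> = tp_const n \<gamma>"
    using assms(2) by (fastforce simp: tp_const_def fun_eq_iff)
  then show ?thesis
    using assms(1) by (simp add: tp_isomorphic_def tp_bracket_def[abs_def])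
qed

theorem mainTheorem10:
  fixes n s :: nat and \<alpha> :: "nat \<Rightarrow> complex"
  assumes "n \<ge> 5" and "5 \<le> s" and "s \<le> n"
    and "\<forall>i. 2 \<le> i \<and> i < s \<longrightarrow> \<alpha> i = 0"
    and "\<alpha> s \<noteq> 0"
  shows "\<exists>a :: complex. tp_isomorphic n \<alpha>
           (\<lambda>i. if i = s then 1 else if i = 2 * s - 3 \<and> 2 * s - 3 \<le> n then a else 0)"
proof -
  define k where "k = s - 2"
  have k: "2 \<le> k" "s = k + 2" using assms(2) by (simp_all add: k_def)
  have "tp_series \<alpha> $ k \<noteq> 0" "\<And>i. i < k \<Longrightarrow> tp_series \<alpha> $ i = 0"
    using assms(4,5) k by (simp_all add: tp_series_def)
  then have "tp_series \<alpha> \<noteq> 0" "subdegree (tp_series \<alpha>) = k"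
    by (auto intro: subdegreeI)
  with k(1) obtain G a
    where G: "conjugate_fields (tp_series \<alpha>) G" "fps_agree (n - 1) G (normal_field k a)"
    using conjugate_fields_normal_form by blast
  define \<beta> where "\<beta> i = G $ (i - 2)" for i
  have "tp_series \<beta> = G" by (simp add: tp_series_def \<beta>_def fps_ext)
  with G(1) have "tp_isomorphic n \<alpha> \<beta>" by (simp add: tp_isomorphic_if_conjugate_fields)
  moreover have "\<beta> i = (if i = s then 1 else if i = 2 * s - 3 \<and> 2 * s - 3 \<le> n then a else 0)"
    if i: "i \<in> {2..n}" for i
  proof -
    have "i - 2 < n - 1" using i assms(1) by auto
    then have "\<beta> i = normal_field k a $ (i - 2)"
      using G(2) by (simp add: \<beta>_def fps_agree_def)
    also have "\<dots> = (if i = s then 1 else if i = 2 * s - 3 \<and> 2 * s - 3 \<le> n then a else 0)"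
      using i k unfolding normal_field_nth by (cases "i = s"; cases "i = 2 * s - 3") auto
    finally show ?thesis .
  qed
  ultimately show ?thesis by (blast intro: tp_isomorphic_cong)
qed

end
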